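(* Let $r>0$, $\theta\in\mathbb{R}$, $\sigma>0$, and let $Y\sim\mathrm{VG}(r,\theta,\sigma,0)$. Set $\lambda_{\pm}=(\sqrt{\theta^2+\sigma^2}\pm\theta)/\sigma^2$. Then for every integer $k\geq1$, \[\mathbb{E}[Y^k]=\frac{\sigma^{2k}}{(\Gamma(r/2))^2}\sum_{j=0}^k\binom{k}{j}(-\lambda_-)^j\lambda_+^{k-j}\,\Gamma\Big(\frac{r}{2}+j\Big)\Gamma\Big(\frac{r}{2}+k-j\Big).\]
   Context: For $r>0$, $\theta\in\mathbb{R}$, $\sigma>0$, $\mu\in\mathbb{R}$, the variance-gamma distribution $\mathrm{VG}(r,\theta,\sigma,\mu)$ is the probability distribution on $\mathbb{R}$ with density \[p(x) = \frac{1}{\sigma\sqrt{\pi}\, \Gamma(r/2)} \mathrm{e}^{\theta (x-\mu)/\sigma^2} \bigg(\frac{|x-\mu|}{2\sqrt{\theta^2 + \sigma^2}}\bigg)^{\frac{r-1}{2}} K_{\frac{r-1}{2}}\bigg(\frac{\sqrt{\theta^2 + \sigma^2}}{\sigma^2} |x-\mu| \bigg),\quad x\in\mathbb{R},\] where $K_\nu(x)=\int_0^\infty \mathrm{e}^{-x\cosh t}\cosh(\nu t)\,\mathrm{d}t$, $x>0$, is the modified Bessel function of the second kind. *)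

theory Defs
  imports "HOL-Probability.Probability"
begin

definition besselK :: "real \<Rightarrow> real \<Rightarrow> real" where
  "besselK \<nu> x = (LINT t:{0<..}|lborel. exp (- x * cosh t) * cosh (\<nu> * t))"

text \<open>Density of the variance-gamma distribution VG(r, theta, sigma, mu).
  (At the single point x = mu the formula is not meaningful; this is a null set.)\<close>
definition vg_density :: "real \<Rightarrow> real \<Rightarrow> real \<Rightarrow> real \<Rightarrow> real \<Rightarrow> real" where
  "vg_density r \<theta> \<sigma> \<mu> x =
     1 / (\<sigma> * sqrt pi * Gamma (r / 2)) * exp (\<theta> * (x - \<mu>) / \<sigma>\<^sup>2)
     * (\<bar>x - \<mu>\<bar> / (2 * sqrt (\<theta>\<^sup>2 + \<sigma>\<^sup>2))) powr ((r - 1) / 2)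
     * besselK ((r - 1) / 2) (sqrt (\<theta>\<^sup>2 + \<sigma>\<^sup>2) / \<sigma>\<^sup>2 * \<bar>x - \<mu>\<bar>)"

end

theory Submission
  imports Defs "HOL-Computational_Algebra.Formal_Power_Series"
begin

text \<open>A \<open>VG(r, \<theta>, \<sigma>, 0)\<close> variable is the normal variance-mean mixture \<open>\<theta> V + \<sigma> \<surd>V Z\<close> of a
  chi-square variable \<open>V\<close> with \<open>r\<close> degrees of freedom and an independent standard normal \<open>Z\<close>:
  integrating the normal density against the chi-square density and substituting \<open>v = \<rho> e\<^sup>t\<close>
  turns the mixture density into the integral defining the Bessel function of order \<open>(r - 1)/2\<close>.
  Expanding \<open>(\<theta> V + \<sigma> \<surd>V Z)\<^sup>k\<close>, the odd moments of \<open>Z\<close> vanish and the even ones combine with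
  the moments \<open>2\<^sup>n (r/2)\<^sub>n\<close> of \<open>V\<close> into \<open>k!\<close> times the coefficient of \<open>X\<^sup>k\<close> in
  \<open>(1 - 2\<theta>X - \<sigma>\<^sup>2X\<^sup>2)\<^sup>-\<^sup>r\<^sup>/\<^sup>2\<close>. Since \<open>1 - 2\<theta>X - \<sigma>\<^sup>2X\<^sup>2 = (1 - \<sigma>\<^sup>2\<lambda>\<^sub>+X)(1 + \<sigma>\<^sup>2\<lambda>\<^sub>-X)\<close>, that
  coefficient is the Cauchy product of two negative binomial series, which is the stated sum.\<close>

unbundle no vec_syntax
unbundle fps_syntax

section \<open>The negative binomial series\<close>

definition fps_negbinomial :: "'a::field_char_0 \<Rightarrow> 'a fps" where
  "fps_negbinomial a = Abs_fps (\<lambda>n. pochhammer a n / fact n)"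

lemma fps_negbinomial_nth [simp]: "fps_negbinomial a $ n = pochhammer a n / fact n"
  by (simp add: fps_negbinomial_def)

lemma fps_deriv_negbinomial_nth:
  "fps_deriv (fps_negbinomial a) $ n = (a + of_nat n) * fps_negbinomial a $ n"
proof -
  have "of_nat (Suc n) * (pochhammer a (Suc n) / fact (Suc n)) = pochhammer a (Suc n) / (fact n :: 'a)"
    by (simp add: fact_Suc del: of_nat_Suc)
  then show ?thesis
    by (simp add: pochhammer_Suc mult_ac del: of_nat_Suc)
qed

lemma fps_negbinomial_ODE:
  "(1 - fps_X) * fps_deriv (fps_negbinomial a) = fps_const a * fps_negbinomial a"
proof (rule fps_ext)
  fix n
  show "((1 - fps_X) * fps_deriv (fps_negbinomial a)) $ n = (fps_const a * fps_negbinomial a) $ n"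
  proof (cases n)
    case (Suc m)
    have "((1 - fps_X) * fps_deriv (fps_negbinomial a)) $ n
          = fps_deriv (fps_negbinomial a) $ Suc m - fps_deriv (fps_negbinomial a) $ m"
      using Suc by (simp add: algebra_simps)
    also have "\<dots> = (a + of_nat (Suc m)) * fps_negbinomial a $ Suc m - of_nat (Suc m) * fps_negbinomial a $ Suc m"
      by (subst fps_deriv_negbinomial_nth) (simp del: fps_negbinomial_nth)
    finally show ?thesis
      using Suc by (simp add: algebra_simps del: fps_negbinomial_nth)
  qed (simp add: fps_deriv_negbinomial_nth)
qed

lemma fps_linear_power_nth:
  fixes c e :: "'a::comm_ring_1"
  shows "((fps_const c + fps_const e * fps_X) ^ n) $ j = of_nat (n choose j) * c ^ (n - j) * e ^ j"
proof -
  have "(fps_const c + fps_const e * fps_X) ^ n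
        = (\<Sum>i\<le>n. fps_const (of_nat (n choose i) * e ^ i * c ^ (n - i)) * fps_X ^ i)"
    unfolding add.commute[of "fps_const c"] binomial_ring
    by (simp add: power_mult_distrib fps_const_power fps_of_nat fps_const_mult[symmetric] mult_ac)
  then show ?thesis
    by (cases "j \<le> n") (simp_all add: fps_sum_nth if_distrib[of "\<lambda>x. _ * x"] mult_ac not_le binomial_eq_0 cong: if_cong)
qed

lemma fps_negbinomial_compose_ODE:
  fixes h :: "'a::field_char_0 fps"
  assumes "h $ 0 = 0"
  shows "(1 - h) * fps_deriv (fps_negbinomial a oo h) = fps_const a * fps_deriv h * (fps_negbinomial a oo h)"
proof -
  have "(1 - h) * fps_deriv (fps_negbinomial a oo h)
        = ((1 - fps_X) oo h) * ((fps_deriv (fps_negbinomial a) oo h) * fps_deriv h)"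
    using assms by (simp add: fps_compose_deriv fps_compose_sub_distrib)
  also have "\<dots> = (((1 - fps_X) * fps_deriv (fps_negbinomial a)) oo h) * fps_deriv h"
    using assms by (simp add: fps_compose_mult_distrib)
  also have "\<dots> = fps_const a * (fps_negbinomial a oo h) * fps_deriv h"
    by (simp add: fps_negbinomial_ODE fps_const_mult_apply_left)
  finally show ?thesis
    by (simp add: algebra_simps)
qed

lemma fps_linear_ODE_unique:
  fixes Y Z D S :: "'a::field_char_0 fps"
  assumes "D $ 0 \<noteq> 0" and "D * fps_deriv Y = S * Y" and "D * fps_deriv Z = S * Z" and "Y $ 0 = Z $ 0"
  shows "Y = Z"
proof -
  define W where "W = Y - Z"
  have "fps_deriv W = (inverse D * S) * W"
  proof -
    have "D * fps_deriv W = S * W"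
      using assms(2,3) by (simp add: W_def algebra_simps)
    then have "inverse D * D * fps_deriv W = inverse D * S * W"
      by (simp add: mult.assoc)
    then show ?thesis
      using assms(1) by (simp add: inverse_mult_eq_1)
  qed
  then have "W $ Suc n = 0" if "\<forall>j\<le>n. W $ j = 0" for n
  proof -
    have "of_nat (Suc n) * W $ Suc n = (inverse D * S * W) $ n"
      by (simp flip: \<open>fps_deriv W = _\<close>)
    also have "\<dots> = 0"
      using that by (auto simp: fps_mult_nth intro!: sum.neutral)
    finally show ?thesis
      by (simp del: of_nat_Suc)
  qed
  moreover have "W $ 0 = 0"
    using assms(4) by (simp add: W_def)
  ultimately have "\<forall>j\<le>n. W $ j = 0" for n
    by (induction n) (auto simp: le_Suc_eq)
  then show ?thesis
    by (auto simp: W_def fps_eq_iff)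
qed

text \<open>Both sides solve the same first-order linear ODE and have the same constant term.\<close>
lemma fps_negbinomial_compose_mult:
  fixes g h :: "'a::field_char_0 fps"
  assumes g: "g $ 0 = 0" and h: "h $ 0 = 0"
  shows "(fps_negbinomial a oo g) * (fps_negbinomial a oo h) = fps_negbinomial a oo (g + h - g * h)"
proof (rule fps_linear_ODE_unique)
  define f where "f = g + h - g * h"
  let ?F = "fps_negbinomial a" and ?A = "fps_const a"
  have f0: "f $ 0 = 0"
    using g h by (simp add: f_def)
  have eg: "(1 - g) * fps_deriv (?F oo g) = ?A * fps_deriv g * (?F oo g)"
    and eh: "(1 - h) * fps_deriv (?F oo h) = ?A * fps_deriv h * (?F oo h)"
    using g h by (simp_all add: fps_negbinomial_compose_ODE)
  have factor: "1 - f = (1 - g) * (1 - h)"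
    by (simp add: f_def algebra_simps)
  have "(1 - f) * fps_deriv ((?F oo g) * (?F oo h))
      = (1 - h) * (?F oo h) * ((1 - g) * fps_deriv (?F oo g)) + (1 - g) * (?F oo g) * ((1 - h) * fps_deriv (?F oo h))"
    unfolding factor fps_deriv_mult by (simp add: algebra_simps)
  also have "\<dots> = ?A * fps_deriv f * ((?F oo g) * (?F oo h))"
    unfolding eg eh by (simp add: f_def algebra_simps)
  finally show "(1 - f) * fps_deriv ((?F oo g) * (?F oo h)) = ?A * fps_deriv f * ((?F oo g) * (?F oo h))" .
  show "(1 - f) * fps_deriv (?F oo f) = ?A * fps_deriv f * (?F oo f)"
    using f0 by (rule fps_negbinomial_compose_ODE)
  show "(1 - f) $ 0 \<noteq> 0"
    using f0 by simp
  show "((?F oo g) * (?F oo h)) $ 0 = (?F oo f) $ 0"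
    using g h f0 by simp
qed

lemma fps_compose_quadratic_nth:
  fixes F :: "'a::comm_ring_1 fps"
  shows "(F oo (fps_const c * fps_X + fps_const e * fps_X ^ 2)) $ k =
     (\<Sum>i=0..k. F $ (k - i) * of_nat ((k - i) choose i) * c ^ (k - 2 * i) * e ^ i)"
proof -
  have "fps_const c * fps_X + fps_const e * fps_X ^ 2 = fps_X * (fps_const c + fps_const e * fps_X)"
    by (simp add: algebra_simps power2_eq_square)
  then have "((fps_const c * fps_X + fps_const e * fps_X ^ 2) ^ n) $ k =
      (if k < n then 0 else of_nat (n choose (k - n)) * c ^ (n - (k - n)) * e ^ (k - n))" for n
    by (simp only: power_mult_distrib fps_X_power_mult_nth fps_linear_power_nth)
  then have "(F oo (fps_const c * fps_X + fps_const e * fps_X ^ 2)) $ k =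
      (\<Sum>n=0..k. F $ n * (if k < n then 0 else of_nat (n choose (k - n)) * c ^ (n - (k - n)) * e ^ (k - n)))"
    by (simp only: fps_compose_nth)
  also have "\<dots> = (\<Sum>i=0..k. F $ (k - i) * of_nat ((k - i) choose i) * c ^ (k - 2 * i) * e ^ i)"
    by (subst sum.atLeastAtMost_rev) (intro sum.cong; auto simp: mult_2)
  finally show ?thesis .
qed

text \<open>Coefficient of \<open>X\<^sup>k\<close> in \<open>(1 - w X)\<^sup>-\<^sup>a (1 - p X)\<^sup>-\<^sup>a = (1 - (p + w) X + p w X\<^sup>2)\<^sup>-\<^sup>a\<close>.\<close>
lemma pochhammer_convolution_quadratic:
  fixes a p w :: "'a::field_char_0"
  shows "(\<Sum>j=0..k. w ^ j * p ^ (k - j) * (pochhammer a j / fact j) * (pochhammer a (k - j) / fact (k - j))) =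
    (\<Sum>i=0..k. pochhammer a (k - i) / fact (k - i) * of_nat ((k - i) choose i) * (p + w) ^ (k - 2 * i) * (- (p * w)) ^ i)"
proof -
  let ?F = "fps_negbinomial a"
  have "(?F oo (fps_const w * fps_X)) * (?F oo (fps_const p * fps_X))
        = ?F oo (fps_const w * fps_X + fps_const p * fps_X - fps_const w * fps_X * (fps_const p * fps_X))"
    by (rule fps_negbinomial_compose_mult) simp_all
  also have "fps_const w * fps_X + fps_const p * fps_X - fps_const w * fps_X * (fps_const p * fps_X)
        = fps_const (p + w) * fps_X + fps_const (- (p * w)) * fps_X ^ 2"
    by (simp add: algebra_simps power2_eq_square flip: fps_const_add fps_const_mult fps_const_neg)
  finally have "(?F oo (fps_const w * fps_X)) * (?F oo (fps_const p * fps_X))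
        = ?F oo (fps_const (p + w) * fps_X + fps_const (- (p * w)) * fps_X ^ 2)" .
  moreover have "((?F oo (fps_const w * fps_X)) * (?F oo (fps_const p * fps_X))) $ k
      = (\<Sum>j=0..k. w ^ j * p ^ (k - j) * (pochhammer a j / fact j) * (pochhammer a (k - j) / fact (k - j)))"
    unfolding fps_mult_nth fps_compose_linear by (simp add: mult_ac)
  ultimately show ?thesis
    by (simp add: fps_compose_quadratic_nth)
qed

section \<open>Moments of the chi-square normal mixture\<close>

lemma has_bochner_integral_gamma_kernel:
  fixes b c :: real
  assumes b: "b > 0" and c: "c > 0"
  shows "has_bochner_integral lborel (\<lambda>v. indicator {0<..} v * v powr (b - 1) * exp (- c * v)) (Gamma b / c powr b)"
proof (rule has_bochner_integral_nn_integral)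
  define f where "f v = indicator {0<..} v * v powr (b - 1) * exp (- c * v)" for v :: real
  have [measurable]: "f \<in> borel_measurable borel"
    unfolding f_def by measurable
  have rescale: "f (0 + (1 / c) * x) = c powr (1 - b) * (indicator {0..} x * x powr (b - 1) / exp x)" for x
    using c by (cases x "0::real" rule: linorder_cases)
      (simp_all add: f_def powr_divide powr_diff exp_minus field_simps)
  have "(\<integral>\<^sup>+v. ennreal (f v) \<partial>lborel) = ennreal (1 / c) * (\<integral>\<^sup>+x. ennreal (f (0 + (1 / c) * x)) \<partial>lborel)"
    using c nn_integral_real_affine[of "\<lambda>v. ennreal (f v)" "1 / c" 0] by simp
  also have "\<dots> = ennreal (1 / c) * (ennreal (c powr (1 - b)) * Gamma b)"
    unfolding rescale Gamma_conv_nn_integral_real[OF b]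
    by (subst ennreal_mult'[OF powr_ge_zero], subst nn_integral_cmult) auto
  also have "\<dots> = ennreal (Gamma b / c powr b)"
    using b c by (simp add: Gamma_real_pos ennreal_mult[symmetric] powr_diff field_simps)
  finally show "(\<integral>\<^sup>+v. ennreal (indicator {0<..} v * v powr (b - 1) * exp (- c * v)) \<partial>lborel) = ennreal (Gamma b / c powr b)"
    by (simp add: f_def)
  show "0 \<le> Gamma b / c powr b"
    using b by (simp add: Gamma_real_pos less_imp_le)
qed auto

definition chi_square_density :: "real \<Rightarrow> real \<Rightarrow> real" where
  "chi_square_density r v = indicator {0<..} v * v powr (r / 2 - 1) * exp (- v / 2) / (Gamma (r / 2) * 2 powr (r / 2))"

lemma chi_square_density_nonneg: "r > 0 \<Longrightarrow> 0 \<le> chi_square_density r v"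
  unfolding chi_square_density_def by (auto intro!: divide_nonneg_pos Gamma_real_pos)

lemma borel_measurable_chi_square_density [measurable]: "chi_square_density r \<in> borel_measurable borel"
  unfolding chi_square_density_def by measurable

lemma has_bochner_integral_chi_square_moment:
  assumes r: "r > 0"
  shows "has_bochner_integral lborel (\<lambda>v. chi_square_density r v * v ^ n) (2 ^ n * pochhammer (r / 2) n)"
proof -
  define a where "a = r / 2"
  have a: "a > 0" and Ga: "Gamma a > 0"
    using r by (simp_all add: a_def Gamma_real_pos)
  have "has_bochner_integral lborel
      (\<lambda>v. indicator {0<..} v * v powr ((a + real n) - 1) * exp (- (1 / 2) * v) / (Gamma a * 2 powr a))
      (Gamma (a + real n) / (1 / 2) powr (a + real n) / (Gamma a * 2 powr a))"
    using a by (intro has_bochner_integral_divide_zero has_bochner_integral_gamma_kernel) auto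
  moreover have "indicator {0<..} v * v powr ((a + real n) - 1) * exp (- (1 / 2) * v) / (Gamma a * 2 powr a)
      = chi_square_density r v * v ^ n" for v
  proof (cases "v > 0")
    case True
    then have "v powr ((a + real n) - 1) = v powr (a - 1) * v ^ n"
      by (simp add: powr_realpow[symmetric] powr_add[symmetric] algebra_simps)
    then show ?thesis
      by (simp add: chi_square_density_def a_def)
  qed (simp add: chi_square_density_def)
  moreover have "Gamma (a + real n) / (1 / 2) powr (a + real n) / (Gamma a * 2 powr a) = 2 ^ n * pochhammer a n"
  proof -
    have "a \<notin> \<int>\<^sub>\<le>\<^sub>0"
      using a by (auto elim!: nonpos_Ints_cases)
    then show ?thesis
      using Ga by (simp add: pochhammer_Gamma powr_divide powr_add powr_realpow field_simps)
  qed
  ultimately show ?thesis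
    by (simp add: a_def)
qed

lemma nn_integral_chi_square_density: "r > 0 \<Longrightarrow> (\<integral>\<^sup>+v. ennreal (chi_square_density r v) \<partial>lborel) = 1"
  using has_bochner_integral_chi_square_moment[of r 0]
  by (subst nn_integral_eq_integral) (auto simp: has_bochner_integral_iff chi_square_density_nonneg)

lemma integrable_chi_square_sqrt_moment:
  assumes r: "r > 0"
  shows "integrable lborel (\<lambda>v. chi_square_density r v * v ^ j * sqrt v ^ m)"
proof (rule Bochner_Integration.integrable_bound)
  show "integrable lborel (\<lambda>v. chi_square_density r v * v ^ j + chi_square_density r v * v ^ (j + m))"
    using has_bochner_integral_chi_square_moment[OF r] by (auto simp: has_bochner_integral_iff)
  show "AE v in lborel. norm (chi_square_density r v * v ^ j * sqrt v ^ m)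
      \<le> norm (chi_square_density r v * v ^ j + chi_square_density r v * v ^ (j + m))"
  proof (rule AE_I2)
    fix v :: real
    show "norm (chi_square_density r v * v ^ j * sqrt v ^ m)
      \<le> norm (chi_square_density r v * v ^ j + chi_square_density r v * v ^ (j + m))"
    proof (cases "v > 0")
      case True
      have "sqrt v ^ m \<le> 1 + v ^ m"
      proof (cases "v \<le> 1")
        case True
        then have "sqrt v ^ m \<le> 1"
          using \<open>v > 0\<close> by (intro power_le_one) auto
        then show ?thesis
          using \<open>v > 0\<close> by (simp add: add_increasing2)
      next
        case False
        then have "sqrt v \<le> v"
          using real_sqrt_le_mono[of v "v * v"] by (simp add: mult_le_cancel_left1)
        then show ?thesis
          using power_mono[OF \<open>sqrt v \<le> v\<close>, of m] \<open>v > 0\<close> by simp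
      qed
      then have "chi_square_density r v * v ^ j * sqrt v ^ m \<le> chi_square_density r v * v ^ j * (1 + v ^ m)"
        using True chi_square_density_nonneg[OF r, of v] by (intro mult_left_mono) auto
      then show ?thesis
        using True chi_square_density_nonneg[OF r, of v] by (simp add: abs_mult power_add algebra_simps)
    qed (simp add: chi_square_density_def)
  qed
qed simp

lemma has_bochner_integral_product:
  fixes f :: "'a \<Rightarrow> real" and g :: "'b \<Rightarrow> real"
  assumes "sigma_finite_measure M" and "sigma_finite_measure N"
    and f: "integrable M f" and g: "integrable N g"
  shows "has_bochner_integral (M \<Otimes>\<^sub>M N) (\<lambda>w. f (fst w) * g (snd w)) (integral\<^sup>L M f * integral\<^sup>L N g)"
proof -
  interpret pair_sigma_finite M N
    using assms(1,2) by (rule pair_sigma_finite.intro)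
  have [measurable]: "f \<in> borel_measurable M" "g \<in> borel_measurable N"
    using f g by auto
  have "(\<lambda>w. ennreal (norm (f (fst w) * g (snd w)))) \<in> borel_measurable (M \<Otimes>\<^sub>M N)"
    by measurable
  from M2.nn_integral_fst[OF this, symmetric]
  have "(\<integral>\<^sup>+w. ennreal (norm (f (fst w) * g (snd w))) \<partial>(M \<Otimes>\<^sub>M N))
      = (\<integral>\<^sup>+x. ennreal (norm (f x)) \<partial>M) * (\<integral>\<^sup>+y. ennreal (norm (g y)) \<partial>N)"
    by (simp add: abs_mult ennreal_mult nn_integral_cmult nn_integral_multc)
  also have "\<dots> < \<infinity>"
    using f g unfolding integrable_iff_bounded by (simp add: ennreal_mult_less_top)
  finally have int: "integrable (M \<Otimes>\<^sub>M N) (\<lambda>w. f (fst w) * g (snd w))"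
    by (intro integrableI_bounded) auto
  then have "integral\<^sup>L (M \<Otimes>\<^sub>M N) (\<lambda>w. f (fst w) * g (snd w)) = integral\<^sup>L M f * integral\<^sup>L N g"
    using integral_fst'[OF int] by simp
  with int show ?thesis
    by (simp add: has_bochner_integral_iff)
qed

lemma sum_atLeast0AtMost_even:
  fixes f :: "nat \<Rightarrow> 'a::comm_monoid_add"
  assumes "\<And>m. odd m \<Longrightarrow> f m = 0"
  shows "(\<Sum>m=0..k. f m) = (\<Sum>i=0..k div 2. f (2 * i))"
proof -
  have "(\<Sum>i=0..k div 2. f (2 * i)) = (\<Sum>m\<in>(*) 2 ` {0..k div 2}. f m)"
    by (simp add: sum.reindex inj_on_def)
  also have "\<dots> = (\<Sum>m=0..k. f m)"
  proof (intro sum.mono_neutral_left ballI)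
    fix m assume "m \<in> {0..k} - (*) 2 ` {0..k div 2}"
    then have "odd m"
      by (auto elim!: evenE)
    then show "f m = 0"
      by (rule assms)
  qed auto
  finally show ?thesis ..
qed

definition chi_square_normal :: "real \<Rightarrow> (real \<times> real) measure" where
  "chi_square_normal r =
     density (lborel \<Otimes>\<^sub>M lborel) (\<lambda>w. ennreal (chi_square_density r (fst w) * std_normal_density (snd w)))"

definition normal_variance_mean :: "real \<Rightarrow> real \<Rightarrow> real \<times> real \<Rightarrow> real" where
  "normal_variance_mean \<theta> \<sigma> w = \<theta> * fst w + \<sigma> * sqrt (fst w) * snd w"

lemma borel_measurable_normal_variance_mean [measurable]:
  "normal_variance_mean \<theta> \<sigma> \<in> borel_measurable (chi_square_normal r)"
  unfolding chi_square_normal_def normal_variance_mean_def[abs_def] by measurable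

lemma has_bochner_integral_chi_square_normal_term:
  assumes r: "r > 0" and "m \<le> k"
  shows "has_bochner_integral (lborel \<Otimes>\<^sub>M lborel)
     (\<lambda>w. (chi_square_density r (fst w) * fst w ^ (k - m) * sqrt (fst w) ^ m) * (std_normal_density (snd w) * snd w ^ m))
     (if even m then 2 ^ (k - m div 2) * pochhammer (r / 2) (k - m div 2) * (fact m / (2 ^ (m div 2) * fact (m div 2)))
      else 0)"
proof -
  have product: "has_bochner_integral (lborel \<Otimes>\<^sub>M lborel)
     (\<lambda>w. (chi_square_density r (fst w) * fst w ^ (k - m) * sqrt (fst w) ^ m) * (std_normal_density (snd w) * snd w ^ m))
     (integral\<^sup>L lborel (\<lambda>v. chi_square_density r v * v ^ (k - m) * sqrt v ^ m) *
      integral\<^sup>L lborel (\<lambda>z. std_normal_density z * z ^ m))"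
    using r by (intro has_bochner_integral_product integrable_chi_square_sqrt_moment integrable_std_normal_moment)
      (simp_all add: lborel.sigma_finite_measure_axioms)
  show ?thesis
  proof (cases "even m")
    case True
    then obtain i where i: "m = 2 * i" ..
    have "(\<lambda>v. chi_square_density r v * v ^ (k - m) * sqrt v ^ m) = (\<lambda>v. chi_square_density r v * v ^ (k - m div 2))"
      using \<open>m \<le> k\<close> i
      by (intro ext, case_tac "v > 0") (simp_all add: chi_square_density_def power_mult power_add[symmetric])
    then have "integral\<^sup>L lborel (\<lambda>v. chi_square_density r v * v ^ (k - m) * sqrt v ^ m)
        = 2 ^ (k - m div 2) * pochhammer (r / 2) (k - m div 2)"
      using has_bochner_integral_chi_square_moment[OF r] by (simp add: has_bochner_integral_integral_eq)
    moreover have "integral\<^sup>L lborel (\<lambda>z. std_normal_density z * z ^ m) = fact m / (2 ^ (m div 2) * fact (m div 2))"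
      using integral_std_normal_moment_even[of i] i by simp
    ultimately show ?thesis
      using product True by simp
  next
    case False
    then obtain i where "m = 2 * i + 1" by (rule oddE)
    then have "integral\<^sup>L lborel (\<lambda>z. std_normal_density z * z ^ m) = 0"
      using integral_std_normal_moment_odd[of i] by simp
    then show ?thesis
      using product False by simp
  qed
qed

lemma has_bochner_integral_normal_variance_mean_power:
  assumes r: "r > 0"
  shows "has_bochner_integral (chi_square_normal r) (\<lambda>w. normal_variance_mean \<theta> \<sigma> w ^ k)
    (\<Sum>i=0..k div 2. of_nat (k choose (2 * i)) * \<theta> ^ (k - 2 * i) * \<sigma> ^ (2 * i)
       * (2 ^ (k - i) * pochhammer (r / 2) (k - i)) * (fact (2 * i) / (2 ^ i * fact i)))"
proof -
  let ?T = "\<lambda>m. if even m then 2 ^ (k - m div 2) * pochhammer (r / 2) (k - m div 2) * (fact m / (2 ^ (m div 2) * fact (m div 2))) else 0"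
  have binomial: "chi_square_density r (fst w) * std_normal_density (snd w) * normal_variance_mean \<theta> \<sigma> w ^ k
      = (\<Sum>m=0..k. of_nat (k choose m) * \<theta> ^ (k - m) * \<sigma> ^ m *
          ((chi_square_density r (fst w) * fst w ^ (k - m) * sqrt (fst w) ^ m) * (std_normal_density (snd w) * snd w ^ m)))" for w
    unfolding normal_variance_mean_def add.commute[of "\<theta> * fst w"] binomial_ring atLeast0AtMost[symmetric]
    by (simp add: sum_distrib_left power_mult_distrib mult_ac)
  have "has_bochner_integral (lborel \<Otimes>\<^sub>M lborel)
      (\<lambda>w. chi_square_density r (fst w) * std_normal_density (snd w) * normal_variance_mean \<theta> \<sigma> w ^ k)
      (\<Sum>m=0..k. of_nat (k choose m) * \<theta> ^ (k - m) * \<sigma> ^ m * ?T m)"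
    unfolding binomial using r
    by (intro has_bochner_integral_sum has_bochner_integral_mult_right has_bochner_integral_chi_square_normal_term) auto
  also have "(\<Sum>m=0..k. of_nat (k choose m) * \<theta> ^ (k - m) * \<sigma> ^ m * ?T m)
      = (\<Sum>i=0..k div 2. of_nat (k choose (2 * i)) * \<theta> ^ (k - 2 * i) * \<sigma> ^ (2 * i)
          * (2 ^ (k - i) * pochhammer (r / 2) (k - i)) * (fact (2 * i) / (2 ^ i * fact i)))"
    by (subst sum_atLeast0AtMost_even) (simp_all add: mult.assoc)
  finally show ?thesis
    unfolding chi_square_normal_def using r
    by (intro has_bochner_integral_density) (auto simp: normal_variance_mean_def chi_square_density_nonneg)
qed

lemma normal_moment_term_eq:
  fixes a \<sigma> \<theta> :: real
  assumes "2 * i \<le> k"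
  shows "of_nat (k choose (2 * i)) * \<theta> ^ (k - 2 * i) * \<sigma> ^ (2 * i)
           * (2 ^ (k - i) * pochhammer a (k - i)) * (fact (2 * i) / (2 ^ i * fact i)) =
         fact k * (pochhammer a (k - i) / fact (k - i) * of_nat ((k - i) choose i) * (2 * \<theta>) ^ (k - 2 * i) * (\<sigma>\<^sup>2) ^ i)"
proof -
  have b1: "(of_nat (k choose (2 * i)) :: real) = fact k / (fact (2 * i) * fact (k - 2 * i))"
    using assms by (simp add: binomial_fact)
  have b2: "(of_nat ((k - i) choose i) :: real) = fact (k - i) / (fact i * fact (k - 2 * i))"
    using assms binomial_fact[of i "k - i", where 'a = real] by (simp add: mult_2)
  have two: "(2::real) ^ (k - i) = 2 ^ (k - 2 * i) * 2 ^ i"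
    using assms by (simp flip: power_add)
  show ?thesis
    unfolding b1 b2 two power_mult by (simp add: power_mult_distrib field_simps)
qed

lemma gamma_moment_term_eq:
  fixes a p q s :: real
  assumes "a > 0" and "s \<noteq> 0" and "j \<le> k"
  shows "s ^ k / (Gamma a)\<^sup>2 * (of_nat (k choose j) * (- (q / s)) ^ j * (p / s) ^ (k - j)
           * Gamma (a + real j) * Gamma (a + real (k - j))) =
         fact k * ((- q) ^ j * p ^ (k - j) * (pochhammer a j / fact j) * (pochhammer a (k - j) / fact (k - j)))"
proof -
  have "a \<notin> \<int>\<^sub>\<le>\<^sub>0"
    using assms(1) by (auto elim!: nonpos_Ints_cases)
  then have Gamma_eq: "Gamma (a + real n) = Gamma a * pochhammer a n" for n
    using Gamma_real_pos[OF assms(1)] by (simp add: pochhammer_Gamma)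
  have "(of_nat (k choose j) :: real) = fact k / (fact j * fact (k - j))"
    using assms(3) by (rule binomial_fact)
  moreover have "s ^ k = s ^ j * s ^ (k - j)"
    using assms(3) by (simp flip: power_add)
  moreover have "Gamma a \<noteq> 0"
    using Gamma_real_pos[OF assms(1)] by simp
  ultimately show ?thesis
    unfolding Gamma_eq using assms
    by (simp add: power_divide power_minus' field_simps power2_eq_square)
qed

text \<open>With \<open>p = \<sigma>\<^sup>2\<lambda>\<^sub>+\<close> and \<open>q = \<sigma>\<^sup>2\<lambda>\<^sub>-\<close> one has \<open>1 - 2\<theta>X - \<sigma>\<^sup>2X\<^sup>2 = (1 - pX)(1 + qX)\<close>.\<close>
lemma chi_square_normal_moment_eq_gamma_sum:
  fixes \<theta> \<sigma> a :: real
  assumes a: "a > 0" and \<sigma>: "\<sigma> > 0"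
  shows "(\<Sum>i=0..k div 2. of_nat (k choose (2 * i)) * \<theta> ^ (k - 2 * i) * \<sigma> ^ (2 * i)
            * (2 ^ (k - i) * pochhammer a (k - i)) * (fact (2 * i) / (2 ^ i * fact i))) =
    \<sigma> ^ (2 * k) / (Gamma a)\<^sup>2 *
      (\<Sum>j = 0..k. real (k choose j)
          * (- ((sqrt (\<theta>\<^sup>2 + \<sigma>\<^sup>2) - \<theta>) / \<sigma>\<^sup>2)) ^ j
          * ((sqrt (\<theta>\<^sup>2 + \<sigma>\<^sup>2) + \<theta>) / \<sigma>\<^sup>2) ^ (k - j)
          * Gamma (a + real j) * Gamma (a + real (k - j)))"
proof -
  define p where "p = sqrt (\<theta>\<^sup>2 + \<sigma>\<^sup>2) + \<theta>"
  define q where "q = sqrt (\<theta>\<^sup>2 + \<sigma>\<^sup>2) - \<theta>"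
  define X where "X i = pochhammer a (k - i) / fact (k - i) * of_nat ((k - i) choose i) * (2 * \<theta>) ^ (k - 2 * i) * (\<sigma>\<^sup>2) ^ i" for i
  have "p + - q = 2 * \<theta>" and "- (p * - q) = \<sigma>\<^sup>2"
    by (simp_all add: p_def q_def algebra_simps power2_eq_square add_nonneg_nonneg)
  have "(\<Sum>i=0..k div 2. of_nat (k choose (2 * i)) * \<theta> ^ (k - 2 * i) * \<sigma> ^ (2 * i)
            * (2 ^ (k - i) * pochhammer a (k - i)) * (fact (2 * i) / (2 ^ i * fact i)))
      = fact k * (\<Sum>i=0..k div 2. X i)"
    unfolding sum_distrib_left X_def by (intro sum.cong refl normal_moment_term_eq) auto
  also have "(\<Sum>i=0..k div 2. X i) = (\<Sum>i=0..k. X i)"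
    by (intro sum.mono_neutral_left) (auto simp: X_def)
  also have "\<dots> = (\<Sum>j=0..k. (- q) ^ j * p ^ (k - j) * (pochhammer a j / fact j) * (pochhammer a (k - j) / fact (k - j)))"
    unfolding X_def pochhammer_convolution_quadratic \<open>p + - q = _\<close> \<open>- (p * - q) = _\<close> ..
  also have "fact k * \<dots> = \<sigma> ^ (2 * k) / (Gamma a)\<^sup>2 *
      (\<Sum>j = 0..k. real (k choose j) * (- (q / \<sigma>\<^sup>2)) ^ j * (p / \<sigma>\<^sup>2) ^ (k - j)
          * Gamma (a + real j) * Gamma (a + real (k - j)))"
    unfolding sum_distrib_left power_mult using a \<sigma> by (intro sum.cong refl gamma_moment_term_eq[symmetric]) auto
  finally show ?thesis
    by (simp add: p_def q_def)
qed

section \<open>The variance-gamma law as a chi-square normal mixture\<close>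

lemma borel_measurable_cosh_real [measurable]: "(cosh :: real \<Rightarrow> real) \<in> borel_measurable borel"
  by (intro borel_measurable_continuous_onI continuous_intros)

lemma borel_measurable_besselK [measurable]: "besselK \<nu> \<in> borel_measurable borel"
  unfolding besselK_def set_lebesgue_integral_def by measurable

lemma borel_measurable_vg_density [measurable]: "vg_density r \<theta> \<sigma> \<mu> \<in> borel_measurable borel"
  unfolding vg_density_def by measurable

lemma nn_integral_Ioi_exp_substitution:
  fixes f :: "real \<Rightarrow> real"
  assumes [measurable]: "f \<in> borel_measurable borel" and c: "c > 0"
  shows "(\<integral>\<^sup>+x. ennreal (f x * indicator {0<..} x) \<partial>lborel) = (\<integral>\<^sup>+t. ennreal (f (c * exp t) * (c * exp t)) \<partial>lborel)"
proof -
  define I where "I n = {c * exp (- real n) .. c * exp (real n)}" for n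
  define J where "J n = {- real n .. real n}" for n
  let ?F = "density lborel (\<lambda>x. ennreal (f x))"
  let ?G = "density lborel (\<lambda>t. ennreal (f (c * exp t) * (c * exp t)))"
  have indicator_ennreal: "ennreal (y * indicator A x) = ennreal y * indicator A x" for y x and A :: "real set"
    by (simp split: split_indicator)
  have "incseq I"
    using c by (auto simp: incseq_def I_def)
  have "incseq J"
    by (auto simp: incseq_def J_def)
  have "(\<Union>n. I n) = {0<..}"
  proof (intro equalityI subsetI)
    fix x :: real assume "x \<in> {0<..}"
    obtain n :: nat where "\<bar>ln (x / c)\<bar> \<le> real n"
      using real_arch_simple by blast
    then have "exp (- real n) \<le> exp (ln (x / c))" and "exp (ln (x / c)) \<le> exp (real n)"
      by simp_all
    with \<open>x \<in> {0<..}\<close> c have "x \<in> I n"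
      by (simp add: I_def field_simps)
    then show "x \<in> (\<Union>n. I n)" by blast
  qed (use c in \<open>auto simp: I_def intro: less_le_trans[rotated]\<close>)
  have "(\<Union>n. J n) = UNIV"
  proof (intro set_eqI iffI UNIV_I)
    fix t :: real
    obtain n :: nat where "\<bar>t\<bar> \<le> real n"
      using real_arch_simple by blast
    then show "t \<in> (\<Union>n. J n)"
      by (intro UN_I[of n]) (auto simp: J_def)
  qed
  have "emeasure ?F (I n) = emeasure ?G (J n)" for n
  proof -
    have "((\<lambda>t. c * exp t) has_real_derivative c * exp t) (at t)" for t
      by (auto intro!: derivative_eq_intros)
    from nn_integral_substitution[where g = "\<lambda>t. c * exp t" and g' = "\<lambda>t. c * exp t" and a = "- real n" and b = "real n",
        OF _ this]
    have "(\<integral>\<^sup>+x. ennreal (f x * indicator (I n) x) \<partial>lborel)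
        = (\<integral>\<^sup>+t. ennreal (f (c * exp t) * (c * exp t) * indicator (J n) t) \<partial>lborel)"
      using c by (simp add: I_def J_def set_borel_measurable_def continuous_intros)
    then show ?thesis
      unfolding indicator_ennreal by (simp add: emeasure_density I_def J_def)
  qed
  then have "(SUP n. emeasure ?F (I n)) = (SUP n. emeasure ?G (J n))"
    by simp
  then have "emeasure ?F (\<Union>n. I n) = emeasure ?G (\<Union>n. J n)"
    using \<open>incseq I\<close> \<open>incseq J\<close> by (subst (asm) (1 2) SUP_emeasure_incseq) (auto simp: I_def J_def)
  then show ?thesis
    unfolding \<open>(\<Union>n. I n) = _\<close> \<open>(\<Union>n. J n) = _\<close> by (simp add: emeasure_density indicator_ennreal)
qed

lemma nn_integral_lborel_reflect_Ioi:
  fixes g :: "real \<Rightarrow> ennreal"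
  assumes [measurable]: "g \<in> borel_measurable borel"
  shows "(\<integral>\<^sup>+t. g t \<partial>lborel) = (\<integral>\<^sup>+t. (g t + g (- t)) * indicator {0<..} t \<partial>lborel)"
proof -
  have "AE t in lborel. g t = g t * indicator {0<..} t + g t * indicator {..<0} t"
    using AE_lborel_singleton[of 0] by eventually_elim (auto split: split_indicator)
  then have "(\<integral>\<^sup>+t. g t \<partial>lborel) = (\<integral>\<^sup>+t. g t * indicator {0<..} t + g t * indicator {..<0} t \<partial>lborel)"
    by (rule nn_integral_cong_AE)
  also have "\<dots> = (\<integral>\<^sup>+t. g t * indicator {0<..} t \<partial>lborel) + (\<integral>\<^sup>+t. g t * indicator {..<0} t \<partial>lborel)"
    by (intro nn_integral_add) auto
  also have "(\<integral>\<^sup>+t. g t * indicator {..<0} t \<partial>lborel) = (\<integral>\<^sup>+t. g (- t) * indicator {0<..} t \<partial>lborel)"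
  proof -
    have "indicator {..<0} (- t) = (indicator {0<..} t :: ennreal)" for t :: real
      by (simp split: split_indicator)
    then show ?thesis
      using nn_integral_real_affine[of "\<lambda>t. g t * indicator {..<0} t" "-1" 0] by simp
  qed
  finally show ?thesis
    by (simp add: nn_integral_add distrib_right)
qed

text \<open>The substitution \<open>v = \<rho> e\<^sup>t\<close> with \<open>\<rho> = \<surd>(A/B)\<close> balances the two terms of the exponent:
  \<open>A/v + B v = 2\<surd>(AB) cosh t\<close>.\<close>
lemma nn_integral_GIG_kernel:
  fixes A B \<nu> :: real
  assumes A: "A > 0" and B: "B > 0"
  shows "(\<integral>\<^sup>+v. ennreal (v powr (\<nu> - 1) * exp (- A / v - B * v) * indicator {0<..} v) \<partial>lborel) =
    ennreal (2 * sqrt (A / B) powr \<nu>) *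
      (\<integral>\<^sup>+t. ennreal (exp (- (2 * sqrt (A * B)) * cosh t) * cosh (\<nu> * t) * indicator {0<..} t) \<partial>lborel)"
proof -
  define \<rho> where "\<rho> = sqrt (A / B)"
  define z where "z = 2 * sqrt (A * B)"
  have \<rho>: "\<rho> > 0"
    using A B by (simp add: \<rho>_def)
  have "A / B * (A * B) = A\<^sup>2"
    using B by (simp add: field_simps power2_eq_square)
  then have "\<rho> * sqrt (A * B) = A"
    using A by (simp add: \<rho>_def flip: real_sqrt_mult)
  then have A_over_\<rho>: "A / \<rho> = sqrt (A * B)"
    using \<rho> by (auto simp: field_simps)
  have "B * \<rho> = sqrt (B\<^sup>2 * (A / B))"
    using B by (simp only: \<rho>_def real_sqrt_mult real_sqrt_abs abs_of_pos)
  also have "B\<^sup>2 * (A / B) = A * B"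
    using B by (simp add: field_simps power2_eq_square)
  finally have B_times_\<rho>: "B * \<rho> = sqrt (A * B)" .
  have exponent: "- A / (\<rho> * exp t) - B * (\<rho> * exp t) = - z * cosh t" for t
  proof -
    have "A / (\<rho> * exp t) + B * (\<rho> * exp t) = A / \<rho> * exp (- t) + B * \<rho> * exp t"
      by (simp add: exp_minus field_simps)
    also have "\<dots> = z * cosh t"
      unfolding A_over_\<rho> B_times_\<rho> by (simp add: z_def cosh_def field_simps)
    finally show ?thesis
      by simp
  qed
  have integrand: "(\<rho> * exp t) powr (\<nu> - 1) * exp (- A / (\<rho> * exp t) - B * (\<rho> * exp t)) * (\<rho> * exp t)
      = \<rho> powr \<nu> * (exp (\<nu> * t) * exp (- z * cosh t))" for t
  proof -
    have "(\<rho> * exp t) powr (\<nu> - 1) * exp (- z * cosh t) * (\<rho> * exp t)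
        = ((\<rho> * exp t) powr (\<nu> - 1) * (\<rho> * exp t)) * exp (- z * cosh t)"
      by (simp only: mult_ac)
    also have "(\<rho> * exp t) powr (\<nu> - 1) * (\<rho> * exp t) = \<rho> powr \<nu> * exp (\<nu> * t)"
      using \<rho> by (simp add: powr_diff powr_mult exp_powr_real mult.commute)
    finally show ?thesis
      unfolding exponent by (simp only: mult.assoc)
  qed
  have "(\<integral>\<^sup>+v. ennreal (v powr (\<nu> - 1) * exp (- A / v - B * v) * indicator {0<..} v) \<partial>lborel)
      = (\<integral>\<^sup>+t. ennreal ((\<rho> * exp t) powr (\<nu> - 1) * exp (- A / (\<rho> * exp t) - B * (\<rho> * exp t)) * (\<rho> * exp t)) \<partial>lborel)"
    using nn_integral_Ioi_exp_substitution[OF _ \<rho>, of "\<lambda>v. v powr (\<nu> - 1) * exp (- A / v - B * v)"] by simp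
  also have "\<dots> = (\<integral>\<^sup>+t. ennreal (\<rho> powr \<nu>) * ennreal (exp (\<nu> * t) * exp (- z * cosh t)) \<partial>lborel)"
    unfolding integrand by (simp add: ennreal_mult')
  also have "\<dots> = ennreal (\<rho> powr \<nu>) * (\<integral>\<^sup>+t. ennreal (exp (\<nu> * t) * exp (- z * cosh t)) \<partial>lborel)"
    by (rule nn_integral_cmult) measurable
  also have "(\<integral>\<^sup>+t. ennreal (exp (\<nu> * t) * exp (- z * cosh t)) \<partial>lborel)
      = (\<integral>\<^sup>+t. ennreal 2 * ennreal (exp (- z * cosh t) * cosh (\<nu> * t) * indicator {0<..} t) \<partial>lborel)"
  proof (subst nn_integral_lborel_reflect_Ioi, measurable, intro nn_integral_cong)
    fix t :: real
    have "exp (\<nu> * t) * exp (- z * cosh t) + exp (\<nu> * - t) * exp (- z * cosh (- t))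
        = 2 * (exp (- z * cosh t) * cosh (\<nu> * t))"
      by (simp add: cosh_def field_simps)
    then have "ennreal (exp (\<nu> * t) * exp (- z * cosh t)) + ennreal (exp (\<nu> * - t) * exp (- z * cosh (- t)))
        = ennreal (2 * (exp (- z * cosh t) * cosh (\<nu> * t)))"
      by (simp flip: ennreal_plus)
    then show "(ennreal (exp (\<nu> * t) * exp (- z * cosh t)) + ennreal (exp (\<nu> * - t) * exp (- z * cosh (- t))))
          * indicator {0<..} t
        = ennreal 2 * ennreal (exp (- z * cosh t) * cosh (\<nu> * t) * indicator {0<..} t)"
      by (simp add: ennreal_mult' split: split_indicator)
  qed
  finally show ?thesis
    by (simp add: nn_integral_cmult \<rho>_def z_def ennreal_mult' mult_ac)
qed

lemma nn_integral_besselK: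
  assumes "(\<integral>\<^sup>+t. ennreal (exp (- z * cosh t) * cosh (\<nu> * t) * indicator {0<..} t) \<partial>lborel) \<noteq> \<infinity>"
  shows "(\<integral>\<^sup>+t. ennreal (exp (- z * cosh t) * cosh (\<nu> * t) * indicator {0<..} t) \<partial>lborel) = ennreal (besselK \<nu> z)"
proof -
  define f where "f t = exp (- z * cosh t) * cosh (\<nu> * t) * indicator {0<..} t" for t :: real
  have f_nonneg: "0 \<le> f t" for t
    by (simp add: f_def cosh_real_nonneg)
  have [measurable]: "f \<in> borel_measurable borel"
    unfolding f_def by measurable
  have "integrable lborel f"
    using assms f_nonneg by (intro integrableI_nonneg) (auto simp: f_def top.not_eq_extremum)
  then have "(\<integral>\<^sup>+t. ennreal (f t) \<partial>lborel) = ennreal (integral\<^sup>L lborel f)"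
    using f_nonneg by (simp add: nn_integral_eq_integral)
  then show ?thesis
    by (simp add: f_def[abs_def] besselK_def set_lebesgue_integral_def mult_ac)
qed

lemma vg_density_GIG_form:
  fixes r \<theta> \<sigma> x :: real
  assumes \<sigma>: "\<sigma> > 0" and x: "x \<noteq> 0"
  defines "A \<equiv> x\<^sup>2 / (2 * \<sigma>\<^sup>2)" and "B \<equiv> (\<theta>\<^sup>2 + \<sigma>\<^sup>2) / (2 * \<sigma>\<^sup>2)"
  shows "vg_density r \<theta> \<sigma> 0 x =
    exp (\<theta> * x / \<sigma>\<^sup>2) / (Gamma (r / 2) * 2 powr (r / 2) * sqrt (2 * pi) * \<sigma>)
      * (2 * sqrt (A / B) powr ((r - 1) / 2)) * besselK ((r - 1) / 2) (2 * sqrt (A * B))"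
proof -
  define s where "s = sqrt (\<theta>\<^sup>2 + \<sigma>\<^sup>2)"
  define \<nu> where "\<nu> = (r - 1) / 2"
  have s: "s > 0" and s2: "s\<^sup>2 = \<theta>\<^sup>2 + \<sigma>\<^sup>2"
    using \<sigma> by (simp_all add: s_def add_nonneg_pos)
  have "A / B = (\<bar>x\<bar> / s)\<^sup>2"
    using \<sigma> s by (simp add: A_def B_def s2 power_divide field_simps)
  then have ratio: "sqrt (A / B) = \<bar>x\<bar> / s"
    using s by simp
  have "A * B = (s / \<sigma>\<^sup>2 * \<bar>x\<bar> / 2)\<^sup>2"
    using \<sigma> by (simp add: A_def B_def s2 power_divide power_mult_distrib field_simps)
  then have product: "2 * sqrt (A * B) = s / \<sigma>\<^sup>2 * \<bar>x\<bar>"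
    using s \<sigma> by simp
  have "2 powr \<nu> = 2 powr (r / 2) / sqrt 2"
    by (simp add: \<nu>_def powr_diff powr_half_sqrt diff_divide_distrib)
  then have half: "(\<bar>x\<bar> / (2 * s)) powr \<nu> = (\<bar>x\<bar> / s) powr \<nu> * sqrt 2 / 2 powr (r / 2)"
    using s by (simp add: powr_divide powr_mult)
  have "vg_density r \<theta> \<sigma> 0 x = exp (\<theta> * x / \<sigma>\<^sup>2) / (Gamma (r / 2) * 2 powr (r / 2) * sqrt pi * \<sigma>)
      * sqrt 2 * (\<bar>x\<bar> / s) powr \<nu> * besselK \<nu> (s / \<sigma>\<^sup>2 * \<bar>x\<bar>)"
    unfolding vg_density_def diff_zero s_def[symmetric] \<nu>_def[symmetric] half by (simp add: field_simps)
  also have "\<dots> = exp (\<theta> * x / \<sigma>\<^sup>2) / (Gamma (r / 2) * 2 powr (r / 2) * sqrt pi * \<sigma>)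
      * (2 / sqrt 2) * (\<bar>x\<bar> / s) powr \<nu> * besselK \<nu> (s / \<sigma>\<^sup>2 * \<bar>x\<bar>)"
    by (simp add: real_div_sqrt)
  finally show ?thesis
    unfolding ratio product \<nu>_def by (simp add: real_sqrt_mult field_simps)
qed

lemma chi_square_normal_density_GIG_form:
  fixes r \<theta> \<sigma> v x :: real
  assumes v: "v > 0" and \<sigma>: "\<sigma> > 0"
  shows "chi_square_density r v * normal_density (\<theta> * v) (\<sigma> * sqrt v) x =
    exp (\<theta> * x / \<sigma>\<^sup>2) / (Gamma (r / 2) * 2 powr (r / 2) * sqrt (2 * pi) * \<sigma>) *
    (v powr ((r - 1) / 2 - 1) * exp (- (x\<^sup>2 / (2 * \<sigma>\<^sup>2)) / v - ((\<theta>\<^sup>2 + \<sigma>\<^sup>2) / (2 * \<sigma>\<^sup>2)) * v))"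
proof -
  have "sqrt (2 * pi * (\<sigma> * sqrt v)\<^sup>2) = sqrt (2 * pi) * \<sigma> * v powr (1 / 2)"
    using v \<sigma> by (simp add: power_mult_distrib real_sqrt_mult powr_half_sqrt)
  moreover have "v powr (r / 2 - 1) / v powr (1 / 2) = v powr ((r - 1) / 2 - 1)"
    using v by (simp add: diff_divide_distrib flip: powr_diff)
  moreover have "- v / 2 + - (x - \<theta> * v)\<^sup>2 / (2 * (\<sigma> * sqrt v)\<^sup>2) =
      \<theta> * x / \<sigma>\<^sup>2 + (- (x\<^sup>2 / (2 * \<sigma>\<^sup>2)) / v - ((\<theta>\<^sup>2 + \<sigma>\<^sup>2) / (2 * \<sigma>\<^sup>2)) * v)"
    using v \<sigma> by (simp add: power_mult_distrib field_simps power2_eq_square)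
  then have "exp (- v / 2) * exp (- (x - \<theta> * v)\<^sup>2 / (2 * (\<sigma> * sqrt v)\<^sup>2)) =
      exp (\<theta> * x / \<sigma>\<^sup>2) * exp (- (x\<^sup>2 / (2 * \<sigma>\<^sup>2)) / v - ((\<theta>\<^sup>2 + \<sigma>\<^sup>2) / (2 * \<sigma>\<^sup>2)) * v)"
    by (simp flip: exp_add)
  ultimately show ?thesis
    using v by (simp add: chi_square_density_def normal_density_def field_simps)
qed

lemma nn_integral_chi_square_normal_density_eq_vg:
  fixes r \<theta> \<sigma> x :: real
  assumes r: "r > 0" and \<sigma>: "\<sigma> > 0" and x: "x \<noteq> 0"
    and finite: "(\<integral>\<^sup>+v. ennreal (chi_square_density r v * normal_density (\<theta> * v) (\<sigma> * sqrt v) x) \<partial>lborel) \<noteq> \<infinity>"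
  shows "(\<integral>\<^sup>+v. ennreal (chi_square_density r v * normal_density (\<theta> * v) (\<sigma> * sqrt v) x) \<partial>lborel) =
    ennreal (vg_density r \<theta> \<sigma> 0 x)"
proof -
  define A where "A = x\<^sup>2 / (2 * \<sigma>\<^sup>2)"
  define B where "B = (\<theta>\<^sup>2 + \<sigma>\<^sup>2) / (2 * \<sigma>\<^sup>2)"
  define C where "C = exp (\<theta> * x / \<sigma>\<^sup>2) / (Gamma (r / 2) * 2 powr (r / 2) * sqrt (2 * pi) * \<sigma>)"
  define \<nu> where "\<nu> = (r - 1) / 2"
  define D where "D = 2 * sqrt (A / B) powr \<nu>"
  define K where "K = (\<integral>\<^sup>+t. ennreal (exp (- (2 * sqrt (A * B)) * cosh t) * cosh (\<nu> * t) * indicator {0<..} t) \<partial>lborel)"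
  have A: "A > 0" and B: "B > 0" and C: "C > 0" and D: "D > 0"
    using x \<sigma> r by (simp_all add: A_def B_def C_def D_def add_nonneg_pos Gamma_real_pos)
  have "(\<integral>\<^sup>+v. ennreal (chi_square_density r v * normal_density (\<theta> * v) (\<sigma> * sqrt v) x) \<partial>lborel)
      = (\<integral>\<^sup>+v. ennreal C * ennreal (v powr (\<nu> - 1) * exp (- A / v - B * v) * indicator {0<..} v) \<partial>lborel)"
  proof (rule nn_integral_cong)
    fix v :: real
    show "ennreal (chi_square_density r v * normal_density (\<theta> * v) (\<sigma> * sqrt v) x)
        = ennreal C * ennreal (v powr (\<nu> - 1) * exp (- A / v - B * v) * indicator {0<..} v)"
      using chi_square_normal_density_GIG_form[of v \<sigma> r \<theta> x] C \<sigma>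
      by (cases "v > 0") (simp_all add: A_def B_def C_def \<nu>_def chi_square_density_def flip: ennreal_mult')
  qed
  also have "\<dots> = ennreal C * (\<integral>\<^sup>+v. ennreal (v powr (\<nu> - 1) * exp (- A / v - B * v) * indicator {0<..} v) \<partial>lborel)"
    by (rule nn_integral_cmult) measurable
  also have "\<dots> = ennreal C * (ennreal D * K)"
    unfolding K_def D_def nn_integral_GIG_kernel[OF A B] ..
  finally have integral_eq: "(\<integral>\<^sup>+v. ennreal (chi_square_density r v * normal_density (\<theta> * v) (\<sigma> * sqrt v) x) \<partial>lborel)
      = ennreal C * (ennreal D * K)" .
  with finite C D have "K \<noteq> \<infinity>"
    by (auto simp: ennreal_mult_eq_top_iff)
  then have "K = ennreal (besselK \<nu> (2 * sqrt (A * B)))"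
    unfolding K_def by (rule nn_integral_besselK)
  moreover have "vg_density r \<theta> \<sigma> 0 x = C * D * besselK \<nu> (2 * sqrt (A * B))"
    unfolding A_def B_def C_def D_def \<nu>_def by (rule vg_density_GIG_form[OF \<sigma> x])
  ultimately show ?thesis
    unfolding integral_eq using C D by (simp add: ennreal_mult' mult.assoc)
qed

lemma borel_measurable_normal_density [measurable (raw)]:
  assumes [measurable]: "f \<in> borel_measurable M" "g \<in> borel_measurable M" "h \<in> borel_measurable M"
  shows "(\<lambda>x. normal_density (f x) (g x) (h x)) \<in> borel_measurable M"
  unfolding normal_density_def by measurable

lemma nn_integral_std_normal_affine:
  fixes g :: "real \<Rightarrow> ennreal"
  assumes s: "s > 0" and [measurable]: "g \<in> borel_measurable borel"
  shows "(\<integral>\<^sup>+z. ennreal (std_normal_density z) * g (\<mu> + s * z) \<partial>lborel) =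
    (\<integral>\<^sup>+x. ennreal (normal_density \<mu> s x) * g x \<partial>lborel)"
proof -
  have "ennreal s * ennreal (normal_density \<mu> s (\<mu> + s * z)) = ennreal (std_normal_density z)" for z
    using s by (simp add: normal_density_def real_sqrt_mult power_mult_distrib field_simps flip: ennreal_mult)
  then show ?thesis
    using s nn_integral_real_affine[of "\<lambda>x. ennreal (normal_density \<mu> s x) * g x" s \<mu>]
    by (simp add: mult.assoc[symmetric] flip: nn_integral_cmult)
qed

lemma prob_space_chi_square_normal:
  assumes "r > 0"
  shows "prob_space (chi_square_normal r)"
proof (rule prob_spaceI)
  have "emeasure (chi_square_normal r) (space (chi_square_normal r))
      = (\<integral>\<^sup>+w. ennreal (chi_square_density r (fst w) * std_normal_density (snd w)) \<partial>(lborel \<Otimes>\<^sub>M lborel))"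
    unfolding chi_square_normal_def space_density
    by (subst emeasure_density[OF _ sets.top]) (auto simp: space_pair_measure)
  also have "\<dots> = (\<integral>\<^sup>+v. ennreal (chi_square_density r v) * (\<integral>\<^sup>+z. ennreal (std_normal_density z) \<partial>lborel) \<partial>lborel)"
    using assms by (simp add: lborel.nn_integral_fst[symmetric] ennreal_mult chi_square_density_nonneg nn_integral_cmult)
  also have "(\<integral>\<^sup>+z. ennreal (std_normal_density z) \<partial>lborel) = 1"
    by (subst nn_integral_eq_integral) auto
  finally show "emeasure (chi_square_normal r) (space (chi_square_normal r)) = 1"
    using assms by (simp add: nn_integral_chi_square_density)
qed

lemma nn_integral_chi_square_normal:
  fixes g :: "real \<Rightarrow> ennreal"
  assumes r: "r > 0" and \<sigma>: "\<sigma> > 0" and [measurable]: "g \<in> borel_measurable borel"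
  shows "(\<integral>\<^sup>+w. g (normal_variance_mean \<theta> \<sigma> w) \<partial>chi_square_normal r) =
    (\<integral>\<^sup>+x. (\<integral>\<^sup>+v. ennreal (chi_square_density r v * normal_density (\<theta> * v) (\<sigma> * sqrt v) x) \<partial>lborel) * g x \<partial>lborel)"
proof -
  have "(\<integral>\<^sup>+w. g (normal_variance_mean \<theta> \<sigma> w) \<partial>chi_square_normal r)
      = (\<integral>\<^sup>+v. \<integral>\<^sup>+z. ennreal (chi_square_density r v) * (ennreal (std_normal_density z) * g (\<theta> * v + \<sigma> * sqrt v * z)) \<partial>lborel \<partial>lborel)"
    unfolding chi_square_normal_def normal_variance_mean_def using r
    by (simp add: nn_integral_density lborel.nn_integral_fst[symmetric] ennreal_mult chi_square_density_nonneg mult.assoc)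
  also have "\<dots> = (\<integral>\<^sup>+v. \<integral>\<^sup>+x. ennreal (chi_square_density r v) * (ennreal (normal_density (\<theta> * v) (\<sigma> * sqrt v) x) * g x) \<partial>lborel \<partial>lborel)"
  proof (rule nn_integral_cong)
    fix v :: real
    show "(\<integral>\<^sup>+z. ennreal (chi_square_density r v) * (ennreal (std_normal_density z) * g (\<theta> * v + \<sigma> * sqrt v * z)) \<partial>lborel)
        = (\<integral>\<^sup>+x. ennreal (chi_square_density r v) * (ennreal (normal_density (\<theta> * v) (\<sigma> * sqrt v) x) * g x) \<partial>lborel)"
    proof (cases "v > 0")
      case True
      with \<sigma> show ?thesis
        by (simp add: nn_integral_cmult nn_integral_std_normal_affine)
    qed (simp add: chi_square_density_def)
  qed
  also have "\<dots> = (\<integral>\<^sup>+x. \<integral>\<^sup>+v. ennreal (chi_square_density r v) * (ennreal (normal_density (\<theta> * v) (\<sigma> * sqrt v) x) * g x) \<partial>lborel \<partial>lborel)"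
    by (rule lborel_pair.Fubini') measurable
  also have "\<dots> = (\<integral>\<^sup>+x. (\<integral>\<^sup>+v. ennreal (chi_square_density r v * normal_density (\<theta> * v) (\<sigma> * sqrt v) x) \<partial>lborel) * g x \<partial>lborel)"
    using r by (simp add: ennreal_mult chi_square_density_nonneg normal_density_nonneg nn_integral_multc flip: mult.assoc)
  finally show ?thesis .
qed

lemma distr_chi_square_normal_eq_vg:
  assumes r: "r > 0" and \<sigma>: "\<sigma> > 0"
  shows "distr (chi_square_normal r) lborel (normal_variance_mean \<theta> \<sigma>) =
    density lborel (\<lambda>x. ennreal (vg_density r \<theta> \<sigma> 0 x))"
proof -
  define I where "I x = (\<integral>\<^sup>+v. ennreal (chi_square_density r v * normal_density (\<theta> * v) (\<sigma> * sqrt v) x) \<partial>lborel)" for x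
  have [measurable]: "I \<in> borel_measurable borel"
    unfolding I_def by measurable
  have "distr (chi_square_normal r) lborel (normal_variance_mean \<theta> \<sigma>) = density lborel I"
  proof (rule measure_eqI)
    fix A assume "A \<in> sets (distr (chi_square_normal r) lborel (normal_variance_mean \<theta> \<sigma>))"
    then have [measurable]: "A \<in> sets borel"
      by simp
    have "emeasure (distr (chi_square_normal r) lborel (normal_variance_mean \<theta> \<sigma>)) A
        = (\<integral>\<^sup>+x. indicator A x \<partial>distr (chi_square_normal r) lborel (normal_variance_mean \<theta> \<sigma>))"
      by (rule nn_integral_indicator[symmetric]) simp
    also have "\<dots> = (\<integral>\<^sup>+w. indicator A (normal_variance_mean \<theta> \<sigma> w) \<partial>chi_square_normal r)"
      by (rule nn_integral_distr) simp_all
    also have "\<dots> = emeasure (density lborel I) A"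
      using r \<sigma> by (simp add: nn_integral_chi_square_normal I_def[symmetric] emeasure_density)
    finally show "emeasure (distr (chi_square_normal r) lborel (normal_variance_mean \<theta> \<sigma>)) A = emeasure (density lborel I) A" .
  qed simp
  also have "density lborel I = density lborel (\<lambda>x. ennreal (vg_density r \<theta> \<sigma> 0 x))"
  proof (rule density_cong)
    have "(\<integral>\<^sup>+x. I x \<partial>lborel) = emeasure (chi_square_normal r) (space (chi_square_normal r))"
      using nn_integral_chi_square_normal[OF r \<sigma>, of "\<lambda>_. 1" \<theta>] by (simp add: I_def)
    then have "AE x in lborel. I x \<noteq> \<infinity>"
      using prob_space.emeasure_space_1[OF prob_space_chi_square_normal[OF r]] by (intro nn_integral_PInf_AE) auto
    then show "AE x in lborel. I x = ennreal (vg_density r \<theta> \<sigma> 0 x)"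
      using AE_lborel_singleton[of 0]
      by eventually_elim (simp add: I_def nn_integral_chi_square_normal_density_eq_vg r \<sigma>)
  qed auto
  finally show ?thesis .
qed

theorem mainTheorem3:
  fixes M :: "'a measure" and Y :: "'a \<Rightarrow> real"
    and r \<theta> \<sigma> :: real and k :: nat
  assumes "prob_space M"
    and "r > 0" and "\<sigma> > 0"
    and "distributed M lborel Y (\<lambda>x. ennreal (vg_density r \<theta> \<sigma> 0 x))"
    and "k \<ge> 1"
  shows "integrable M (\<lambda>\<omega>. Y \<omega> ^ k) \<and>
    (\<integral>\<omega>. Y \<omega> ^ k \<partial>M) =
      \<sigma> ^ (2 * k) / (Gamma (r / 2))\<^sup>2 *
      (\<Sum>j = 0..k. real (k choose j)
          * (- ((sqrt (\<theta>\<^sup>2 + \<sigma>\<^sup>2) - \<theta>) / \<sigma>\<^sup>2)) ^ j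
          * ((sqrt (\<theta>\<^sup>2 + \<sigma>\<^sup>2) + \<theta>) / \<sigma>\<^sup>2) ^ (k - j)
          * Gamma (r / 2 + real j) * Gamma (r / 2 + real (k - j)))"
proof -
  note r = \<open>r > 0\<close> and \<sigma> = \<open>\<sigma> > 0\<close>
  let ?moment = "\<sigma> ^ (2 * k) / (Gamma (r / 2))\<^sup>2 *
      (\<Sum>j = 0..k. real (k choose j)
          * (- ((sqrt (\<theta>\<^sup>2 + \<sigma>\<^sup>2) - \<theta>) / \<sigma>\<^sup>2)) ^ j
          * ((sqrt (\<theta>\<^sup>2 + \<sigma>\<^sup>2) + \<theta>) / \<sigma>\<^sup>2) ^ (k - j)
          * Gamma (r / 2 + real j) * Gamma (r / 2 + real (k - j)))"
  have [measurable]: "Y \<in> borel_measurable M"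
    and law: "distr M lborel Y = density lborel (\<lambda>x. ennreal (vg_density r \<theta> \<sigma> 0 x))"
    using \<open>distributed M lborel Y _\<close> by (auto simp: distributed_def)
  have "has_bochner_integral (chi_square_normal r) (\<lambda>w. normal_variance_mean \<theta> \<sigma> w ^ k) ?moment"
    using has_bochner_integral_normal_variance_mean_power[OF r, where \<theta> = \<theta> and \<sigma> = \<sigma> and k = k]
      chi_square_normal_moment_eq_gamma_sum[where a = "r / 2" and \<sigma> = \<sigma> and \<theta> = \<theta> and k = k] r \<sigma>
    by simp
  then have "has_bochner_integral (distr M lborel Y) (\<lambda>x. x ^ k) ?moment"
    unfolding law distr_chi_square_normal_eq_vg[OF r \<sigma>, symmetric]
    by (intro has_bochner_integral_distr) auto
  then show ?thesis
    by (simp add: has_bochner_integral_iff integrable_distr_eq integral_distr)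
qed

end
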